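(* For all $i,j\in\{1,\dots,n\}$ the following relations hold in $(\mathcal{A}'/\mathrm{II},\diamond)$ (with summation over the repeated index $i$ in the last three): \begin{align*} \overline{\partial_i}\diamond\overline{\gamma^j}-\overline{\gamma^j}\diamond\overline{\partial_i}&=\tfrac1H\,\overline{\gamma_i}\diamond\overline{\partial^j},\\ \overline{\gamma^i}\diamond\overline{\gamma^j}+\overline{\gamma^j}\diamond\overline{\gamma^i}&=2\eta^{ij}\overline1+\tfrac{2}{H+1}\big(\overline{x^j}\diamond\overline{\partial^i}+\overline{x^i}\diamond\overline{\partial^j}\big),\\ \overline{\partial_i}\diamond\overline{x^j}-\overline{x^j}\diamond\overline{\partial_i}&=\delta_i^j\overline1+\tfrac1{2H}\,\overline{\gamma_i}\diamond\overline{\gamma^j}+\tfrac1{H+1}\,\overline{x_i}\diamond\overline{\partial^j},\\ \overline{\gamma^i}\diamond\overline{x^j}-\overline{x^j}\diamond\overline{\gamma^i}&=\tfrac1{H+1}\,\overline{x^i}\diamond\overline{\gamma^j},\\ \overline{x^i}\diamond\overline{\partial_i}&=\big(-\tfrac n2-H\big)\overline1,\\ \overline{\gamma^i}\diamond\overline{\partial_i}&=0,\\ \overline{\gamma_i}\diamond\overline{x^i}&=0. \end{align*}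
   Context: Fix $n\ge1$ and an invertible complex matrix $\eta=(\eta^{ij})$ with $\eta^{ij}=\eta^{ji}$ and inverse $(\eta_{ij})$. $\mathcal{A}=W(2n|n)$ is the associative superalgebra generated by even $x^1,\dots,x^n,\partial_1,\dots,\partial_n$ and odd $\gamma^1,\dots,\gamma^n$ with relations $x^ix^j=x^jx^i$, $\partial_i\partial_j=\partial_j\partial_i$, $\partial_ix^j-x^j\partial_i=\delta_i^j$, $\gamma^i$ commuting with all $x^j,\partial_j$, $\gamma^i\gamma^j+\gamma^j\gamma^i=2\eta^{ij}$. Repeated indices are summed; $x_i=\eta_{ij}x^j$, $\partial^i=\eta^{ij}\partial_j$, $\gamma_i=\eta_{ij}\gamma^j$. Set $X=\frac{\sqrt{-1}}{\sqrt2}\gamma^i\partial_i$, $Y=\frac{\sqrt{-1}}{\sqrt2}\gamma^ix_i$, $H=-\frac12(\partial_ix^i+x^i\partial_i)$, $E=-\frac12\partial^i\partial_i$, $F=\frac12x^ix_i$. Let $\mathcal{A}'$ be the localization of $\mathcal{A}$ at the multiplicative set generated by $\{H+k:k\in\mathbb{Z}\}$, $\mathrm{II}:=Y\mathcal{A}'+F\mathcal{A}'+\mathcal{A}'X+\mathcal{A}'E$, and $\overline a:=a+\mathrm{II}$. Define $\kappa_k(t)=-k/2$ for $k$ even, $\kappa_k(t)=t+\frac{k+1}2$ for $k$ odd, $\varphi_k(t)=\prod_{l=1}^k\frac{(-1)^l}{\kappa_l(t)}$. The diamond product is $\overline a\diamond\overline b:=\sum_{k\ge0}a\varphi_k(H)Y^kX^kb+\mathrm{II}$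 (all but finitely many terms lie in $\mathrm{II}$); it is associative. For a rational function $\phi$ with $\phi(H)\in\mathcal{A}'$ one writes $\phi(H)\,\overline a:=\overline{\phi(H)a}$ $(=\overline{\phi(H)}\diamond\overline a)$, e.g. $\frac1H\overline{a}=\overline{H^{-1}a}$. *)

theory Defs
  imports Complex_Main
begin

text \<open>Generators: Xg i = x^i, Dg i = \<partial>_i, Gg i = \<gamma>^i, indices i in {1..n}.\<close>
datatype gen = Xg nat | Dg nat | Gg nat

fun valid_gen :: "nat \<Rightarrow> gen \<Rightarrow> bool" where
  "valid_gen n (Xg i) = (1 \<le> i \<and> i \<le> n)"
| "valid_gen n (Dg i) = (1 \<le> i \<and> i \<le> n)"
| "valid_gen n (Gg i) = (1 \<le> i \<and> i \<le> n)"

text \<open>Elements of the free associative C-algebra: finitely supported coefficient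
  functions on words in the valid generators.\<close>
type_synonym fa = "gen list \<Rightarrow> complex"

definition fin_fa :: "nat \<Rightarrow> fa \<Rightarrow> bool" where
  "fin_fa n f \<longleftrightarrow> finite {w. f w \<noteq> 0} \<and> (\<forall>w. f w \<noteq> 0 \<longrightarrow> list_all (valid_gen n) w)"

definition fone :: fa where "fone = (\<lambda>w. if w = [] then 1 else 0)"
definition fzero :: fa where "fzero = (\<lambda>w. 0)"
definition fadd :: "fa \<Rightarrow> fa \<Rightarrow> fa" where "fadd f h = (\<lambda>w. f w + h w)"
definition fsmul :: "complex \<Rightarrow> fa \<Rightarrow> fa" where "fsmul c f = (\<lambda>w. c * f w)"
definition fmul :: "fa \<Rightarrow> fa \<Rightarrow> fa" where
  "fmul f h = (\<lambda>w. \<Sum>k\<le>length w. f (take k w) * h (drop k w))"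
definition fgen :: "gen \<Rightarrow> fa" where "fgen a = (\<lambda>w. if w = [a] then 1 else 0)"

definition rels :: "nat \<Rightarrow> (nat \<Rightarrow> nat \<Rightarrow> complex) \<Rightarrow> fa set" where
  "rels n eta = (\<Union>i\<in>{1..n}. \<Union>j\<in>{1..n}.
     { fadd (fmul (fgen (Xg i)) (fgen (Xg j))) (fsmul (-1) (fmul (fgen (Xg j)) (fgen (Xg i)))),
       fadd (fmul (fgen (Dg i)) (fgen (Dg j))) (fsmul (-1) (fmul (fgen (Dg j)) (fgen (Dg i)))),
       fadd (fadd (fmul (fgen (Dg i)) (fgen (Xg j))) (fsmul (-1) (fmul (fgen (Xg j)) (fgen (Dg i)))))
            (fsmul (- (if i = j then 1 else 0)) fone),
       fadd (fmul (fgen (Gg i)) (fgen (Xg j))) (fsmul (-1) (fmul (fgen (Xg j)) (fgen (Gg i)))),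
       fadd (fmul (fgen (Gg i)) (fgen (Dg j))) (fsmul (-1) (fmul (fgen (Dg j)) (fgen (Gg i)))),
       fadd (fadd (fmul (fgen (Gg i)) (fgen (Gg j))) (fmul (fgen (Gg j)) (fgen (Gg i))))
            (fsmul (- 2 * eta i j) fone) })"

inductive_set ideal_gen :: "nat \<Rightarrow> fa set \<Rightarrow> fa set" for n :: nat and R :: "fa set" where
  base: "r \<in> R \<Longrightarrow> r \<in> ideal_gen n R"
| zero: "fzero \<in> ideal_gen n R"
| add: "a \<in> ideal_gen n R \<Longrightarrow> b \<in> ideal_gen n R \<Longrightarrow> fadd a b \<in> ideal_gen n R"
| lmul: "a \<in> ideal_gen n R \<Longrightarrow> fin_fa n f \<Longrightarrow> fmul f a \<in> ideal_gen n R"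
| rmul: "a \<in> ideal_gen n R \<Longrightarrow> fin_fa n f \<Longrightarrow> fmul a f \<in> ideal_gen n R"

definition H_fa :: "nat \<Rightarrow> fa" where
  "H_fa n = fsmul (-1/2) (\<lambda>w. \<Sum>i\<in>{1..n}.
      fadd (fmul (fgen (Dg i)) (fgen (Xg i))) (fmul (fgen (Xg i)) (fgen (Dg i))) w)"

definition S_fa :: "nat \<Rightarrow> fa set" where
  "S_fa n = {foldr (\<lambda>k acc. fmul (fadd (H_fa n) (fsmul (of_int k) fone)) acc) ks fone | ks. True}"

definition is_unit_r :: "'r::ring_1 \<Rightarrow> bool" where
  "is_unit_r x \<longleftrightarrow> (\<exists>t. x * t = 1 \<and> t * x = 1)"

definition rinv :: "'r::ring_1 \<Rightarrow> 'r" where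
  "rinv x = (SOME t. x * t = 1 \<and> t * x = 1)"

definition ev :: "(complex \<Rightarrow> 'r::ring_1) \<Rightarrow> (gen \<Rightarrow> 'r) \<Rightarrow> fa \<Rightarrow> 'r" where
  "ev e g f = (\<Sum>w\<in>{w. f w \<noteq> 0}. e (f w) * prod_list (map g w))"

text \<open>(e, g) presents 'r as the (right Ore) localization A' of A = W(2n|n) = F/I at the
  multiplicative set generated by the H + k: the induced map A \<rightarrow> 'r is a C-algebra map,
  sends S to units, every element is a right fraction a s^{-1}, and its kernel is
  {a | a s = 0 for some s in S} (standard definition of a ring of right fractions).\<close>
definition is_localization :: "nat \<Rightarrow> (nat \<Rightarrow> nat \<Rightarrow> complex) \<Rightarrow> (complex \<Rightarrow> 'r::ring_1)
    \<Rightarrow> (gen \<Rightarrow> 'r) \<Rightarrow> bool" where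
  "is_localization n eta e g \<longleftrightarrow>
     (\<forall>a b. e (a + b) = e a + e b) \<and> (\<forall>a b. e (a * b) = e a * e b) \<and> e 1 = 1 \<and>
     (\<forall>c r. e c * r = r * e c) \<and>
     (\<forall>s\<in>S_fa n. is_unit_r (ev e g s)) \<and>
     (\<forall>r. \<exists>f s. fin_fa n f \<and> s \<in> S_fa n \<and> r = ev e g f * rinv (ev e g s)) \<and>
     (\<forall>f. fin_fa n f \<longrightarrow>
        (ev e g f = 0 \<longleftrightarrow> (\<exists>s\<in>S_fa n. fmul f s \<in> ideal_gen n (rels n eta))))"

context
  fixes n :: nat and eta etainv :: "nat \<Rightarrow> nat \<Rightarrow> complex"
    and e :: "complex \<Rightarrow> 'r::ring_1" and g :: "gen \<Rightarrow> 'r"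
begin

definition xup :: "nat \<Rightarrow> 'r" where "xup i = g (Xg i)"
definition dlow :: "nat \<Rightarrow> 'r" where "dlow i = g (Dg i)"
definition gup :: "nat \<Rightarrow> 'r" where "gup i = g (Gg i)"
definition xlow :: "nat \<Rightarrow> 'r" where "xlow i = (\<Sum>j\<in>{1..n}. e (etainv i j) * xup j)"
definition dup :: "nat \<Rightarrow> 'r" where "dup i = (\<Sum>j\<in>{1..n}. e (eta i j) * dlow j)"
definition glow :: "nat \<Rightarrow> 'r" where "glow i = (\<Sum>j\<in>{1..n}. e (etainv i j) * gup j)"

definition Xo :: 'r where
  "Xo = e (\<i> / complex_of_real (sqrt 2)) * (\<Sum>i\<in>{1..n}. gup i * dlow i)"
definition Yo :: 'r where
  "Yo = e (\<i> / complex_of_real (sqrt 2)) * (\<Sum>i\<in>{1..n}. gup i * xlow i)"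
definition Ho :: 'r where
  "Ho = e (-1/2) * (\<Sum>i\<in>{1..n}. dlow i * xup i + xup i * dlow i)"
definition Eo :: 'r where
  "Eo = e (-1/2) * (\<Sum>i\<in>{1..n}. dup i * dlow i)"
definition Fo :: 'r where
  "Fo = e (1/2) * (\<Sum>i\<in>{1..n}. xup i * xlow i)"

definition II :: "'r set" where
  "II = {Yo * a + Fo * b + c * Xo + d * Eo | a b c d. True}"

definition kappa :: "nat \<Rightarrow> 'r" where
  "kappa l = (if even l then e (- of_nat l / 2) else Ho + e (of_nat (l + 1) / 2))"

definition phi :: "nat \<Rightarrow> 'r" where
  "phi k = prod_list (map (\<lambda>l. e ((-1) ^ l) * rinv (kappa l)) [1..<Suc k])"

definition dterm :: "'r \<Rightarrow> 'r \<Rightarrow> nat \<Rightarrow> 'r" where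
  "dterm a b k = a * phi k * Yo ^ k * Xo ^ k * b"

text \<open>A representative of (a + II) \<diamond> (b + II): the sum of the terms up to a bound
  beyond which all terms lie in II.\<close>
definition dia :: "'r \<Rightarrow> 'r \<Rightarrow> 'r" where
  "dia a b = (let N = (SOME N. \<forall>k\<ge>N. dterm a b k \<in> II) in \<Sum>k<N. dterm a b k)"

end

end

theory Submission
  imports Defs "Jordan_Normal_Form.Determinant"
begin

(* Write d_l for the derivations and c = i / sqrt 2, so that X = c gamma^l d_l,
   Y = c gamma^l x_l and c^2 = -1/2.  X commutes with the d_j, X^2 commutes with the gamma^j,
   and X^3 x^j = (X x^j X - d^j) X.  Hence in the sum defining a <> b the terms of index
   k >= 1, 2, 3 lie in A' X, a part of II, for b = d_j, gamma^j, x^j respectively; with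
   phi_1 = -(H+1)^-1 and phi_2 = (H+1)^-1 the product is an explicit finite expression whose
   correction terms begin with a (H+1)^-1 Y.  Since x^j and Y lower H by one and d_j raises it,
   a (H+1)^-1 = (H+k)^-1 a, and each generator satisfies a Y = Y a' + c w with w explicit.
   The part Y a' lies in Y A', while c^2 = -1/2 turns c w into the right-hand sides of the
   relations.  The last three relations come from H = -n/2 - x^l d_l and from
   gamma^l d_l = X / c, gamma_l x^l = Y / c. *)

definition fword :: "gen list \<Rightarrow> fa" where
  "fword u = (\<lambda>w. if w = u then 1 else 0)"

lemma fone_eq_fword: "fone = fword []"
  by (simp add: fone_def fword_def fun_eq_iff)

lemma fmul_fone_right: "fmul f fone = f"
proof
  fix w
  have "fmul f fone w = (\<Sum>k\<in>{length w}. f (take k w) * fone (drop k w))"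
    unfolding fmul_def by (rule sum.mono_neutral_right) (auto simp: fone_def)
  then show "fmul f fone w = f w" by (simp add: fone_def)
qed

lemma fmul_fgen_fgen: "fmul (fgen a) (fgen b) = fword [a, b]"
proof
  fix w
  show "fmul (fgen a) (fgen b) w = fword [a, b] w"
  proof (cases "w = [a, b]")
    case True
    have "fmul (fgen a) (fgen b) w = (\<Sum>k\<in>{1}. fgen a (take k w) * fgen b (drop k w))"
      unfolding fmul_def
      by (rule sum.mono_neutral_right) (auto simp: True fgen_def le_Suc_eq numeral_2_eq_2)
    then show ?thesis by (simp add: True fgen_def fword_def)
  next
    case False
    have vanish: "fgen a (take k w) * fgen b (drop k w) = 0" for k
    proof (cases "take k w = [a] \<and> drop k w = [b]")
      case True
      then have "w = [a, b]" by (metis append_Cons append_Nil append_take_drop_id)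
      with False show ?thesis by simp
    qed (auto simp: fgen_def)
    show ?thesis using False by (simp only: fmul_def fword_def vanish) simp
  qed
qed

definition fin_supp :: "fa \<Rightarrow> bool" where
  "fin_supp f \<longleftrightarrow> finite {w. f w \<noteq> 0}"

lemma fin_supp_fword: "fin_supp (fword u)"
  by (simp add: fin_supp_def fword_def)

lemma fin_supp_fadd: "fin_supp f \<Longrightarrow> fin_supp h \<Longrightarrow> fin_supp (fadd f h)"
  unfolding fin_supp_def fadd_def
  by (rule finite_subset[of _ "{w. f w \<noteq> 0} \<union> {w. h w \<noteq> 0}"]) auto

lemma fin_supp_fsmul: "fin_supp f \<Longrightarrow> fin_supp (fsmul c f)"
  unfolding fin_supp_def fsmul_def by (rule finite_subset[of _ "{w. f w \<noteq> 0}"]) auto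

lemma fin_supp_sum: "(\<And>i. i \<in> A \<Longrightarrow> fin_supp (f i)) \<Longrightarrow> fin_supp (\<lambda>w. \<Sum>i\<in>A. f i w)"
proof (induction A rule: infinite_finite_induct)
  case (insert a A)
  then have "(\<lambda>w. \<Sum>i\<in>insert a A. f i w) = fadd (f a) (\<lambda>w. \<Sum>i\<in>A. f i w)"
    by (simp add: fadd_def fun_eq_iff)
  with insert show ?case by (simp add: fin_supp_fadd)
qed (simp_all add: fin_supp_def)

lemma fin_fa_fword: "list_all (valid_gen n) u \<Longrightarrow> fin_fa n (fword u)"
  by (simp add: fin_fa_def fword_def)

lemma fin_fa_fadd:
  assumes "fin_fa n f" "fin_fa n h"
  shows "fin_fa n (fadd f h)"
proof -
  have "\<forall>w. fadd f h w \<noteq> 0 \<longrightarrow> f w \<noteq> 0 \<or> h w \<noteq> 0"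
    by (auto simp: fadd_def)
  with assms fin_supp_fadd[of f h] show ?thesis
    unfolding fin_fa_def fin_supp_def by blast
qed

lemma fin_fa_fsmul: "fin_fa n f \<Longrightarrow> fin_fa n (fsmul c f)"
  using fin_supp_fsmul[of f c] unfolding fin_fa_def fin_supp_def by (auto simp: fsmul_def)

lemma H_fa_eq:
  "H_fa n = fsmul (-1/2) (\<lambda>w. \<Sum>i\<in>{1..n}. fadd (fword [Dg i, Xg i]) (fword [Xg i, Dg i]) w)"
  by (simp add: H_fa_def fmul_fgen_fgen)

lemma fin_supp_H_fa: "fin_supp (H_fa n)"
  unfolding H_fa_eq by (intro fin_supp_fsmul fin_supp_sum fin_supp_fadd fin_supp_fword)

lemma is_unit_r_rinv:
  assumes "is_unit_r u"
  shows "u * rinv u = 1" "rinv u * u = 1"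
  using someI_ex[OF assms[unfolded is_unit_r_def]] by (simp_all add: rinv_def)

lemma rinv_intertwine:
  assumes u: "is_unit_r u" and v: "is_unit_r v" and "u * a = a * v"
  shows "rinv u * a = a * rinv v"
proof -
  have "rinv u * a = rinv u * a * (v * rinv v)" by (simp add: is_unit_r_rinv[OF v])
  also have "\<dots> = rinv u * (u * a) * rinv v" by (simp add: assms(3) mult.assoc)
  also have "\<dots> = a * rinv v" by (simp add: is_unit_r_rinv[OF u] flip: mult.assoc)
  finally show ?thesis .
qed

lemma rinv_minus_one: "rinv (- 1 :: 'r::ring_1) = - 1"
proof -
  have unit: "is_unit_r (- 1 :: 'r)" unfolding is_unit_r_def by (rule exI[of _ "- 1"]) simp
  have "rinv (- 1 :: 'r) = rinv (- 1) * (- 1) * (- 1)" by (simp flip: mult.assoc)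
  also have "\<dots> = - 1" by (simp only: is_unit_r_rinv(2)[OF unit] mult_1_left)
  finally show ?thesis .
qed

lemma rinv_add_one:
  assumes "is_unit_r u" "is_unit_r (u + 1)"
  shows "rinv u * rinv (u + 1) + rinv (u + 1) = rinv u"
proof -
  have "rinv u = rinv u * ((u + 1) * rinv (u + 1))" by (simp add: is_unit_r_rinv(1)[OF assms(2)])
  also have "\<dots> = rinv u * u * rinv (u + 1) + rinv u * rinv (u + 1)"
    by (simp add: distrib_left distrib_right mult.assoc)
  finally show ?thesis by (simp add: is_unit_r_rinv(2)[OF assms(1)] add.commute)
qed

lemma sum_intertwine:
  fixes A B :: "'r::ring_1"
  assumes "\<And>j. j \<in> S \<Longrightarrow> A * f j = f j * B"
  shows "A * sum f S = sum f S * B"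
  by (simp add: sum_distrib_left sum_distrib_right assms cong: sum.cong)

lemma mult_intertwine:
  fixes A B C a b :: "'r::ring_1"
  assumes "A * a = a * B" "B * b = b * C"
  shows "A * (a * b) = (a * b) * C"
  by (metis assms mult.assoc)

lemma mult_double_right: "r * (2 * t) = 2 * (r * t :: 'r::ring_1)"
  by (simp add: mult_2 distrib_left)

lemma inverse_of_symmetric_symmetric:
  fixes A B :: "nat \<Rightarrow> nat \<Rightarrow> 'a::field"
  assumes sym: "\<forall>a\<in>{1..n}. \<forall>b\<in>{1..n}. A a b = A b a"
    and inv: "\<forall>a\<in>{1..n}. \<forall>c\<in>{1..n}. (\<Sum>b\<in>{1..n}. A a b * B b c) = (if a = c then 1 else 0)"
    and "a \<in> {1..n}" "c \<in> {1..n}"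
  shows "B a c = B c a"
proof -
  define MA where "MA = mat n n (\<lambda>(a, b). A (Suc a) (Suc b))"
  define MB where "MB = mat n n (\<lambda>(a, b). B (Suc a) (Suc b))"
  have shift: "(\<Sum>b\<in>{1..n}. f b) = (\<Sum>b<n. f (Suc b))" for f :: "nat \<Rightarrow> 'a"
    by (induction n) (simp_all add: sum.cl_ivl_Suc)
  have carrier: "MA \<in> carrier_mat n n" "MB \<in> carrier_mat n n" by (auto simp: MA_def MB_def)
  have "MA * MB = 1\<^sub>m n"
  proof (rule eq_matI)
    fix a c assume "a < dim_row (1\<^sub>m n)" "c < dim_col (1\<^sub>m n)"
    then have "a < n" "c < n" by auto
    then have "(MA * MB) $$ (a, c) = (\<Sum>b<n. A (Suc a) (Suc b) * B (Suc b) (Suc c))"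
      by (simp add: MA_def MB_def scalar_prod_def atLeast0LessThan)
    also have "\<dots> = (\<Sum>b\<in>{1..n}. A (Suc a) b * B b (Suc c))"
      by (rule shift[symmetric])
    also have "\<dots> = 1\<^sub>m n $$ (a, c)" using inv \<open>a < n\<close> \<open>c < n\<close> by auto
    finally show "(MA * MB) $$ (a, c) = 1\<^sub>m n $$ (a, c)" .
  qed (auto simp: MA_def MB_def)
  moreover have "transpose_mat MA = MA"
    using sym by (intro eq_matI) (auto simp: MA_def)
  ultimately have "transpose_mat MB * MA = 1\<^sub>m n"
    using transpose_mult[OF carrier] by simp
  then have "transpose_mat MB = MB"
    using assoc_mult_mat[of "transpose_mat MB" n n MA n MB n] carrier \<open>MA * MB = 1\<^sub>m n\<close> by simp
  moreover obtain a' c' where "a = Suc a'" "a' < n" "c = Suc c'" "c' < n"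
    using assms(3,4)
    by (metis Suc_le_D Suc_le_lessD atLeastAtMost_iff less_Suc_eq_le not0_implies_Suc not_one_le_zero)
  ultimately have "transpose_mat MB $$ (c', a') = MB $$ (c', a')" by simp
  then show ?thesis using \<open>a = Suc a'\<close> \<open>a' < n\<close> \<open>c = Suc c'\<close> \<open>c' < n\<close>
    by (simp add: MB_def)
qed

locale central_hom =
  fixes e :: "complex \<Rightarrow> 'r::ring_1"
  assumes hom_add: "e (a + b) = e a + e b"
    and hom_mult: "e (a * b) = e a * e b"
    and hom_one: "e 1 = 1"
    and central: "e a * r = r * e a"
begin

lemma hom_zero: "e 0 = 0"
  using hom_add[of 0 0] by simp

lemma hom_uminus: "e (- a) = - e a"
  using hom_add[of a "- a"] by (simp add: hom_zero minus_unique)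

lemma hom_diff: "e (a - b) = e a - e b"
  using hom_add[of a "- b"] by (simp add: hom_uminus)

lemma hom_of_nat: "e (of_nat m) = of_nat m"
  by (induction m) (simp_all add: hom_zero hom_add hom_one)

lemma hom_of_int: "e (of_int k) = of_int k"
  by (cases k) (simp_all add: hom_of_nat hom_uminus hom_diff hom_one)

lemma hom_numeral: "e (numeral m) = numeral m"
  using hom_of_nat[of "numeral m"] by simp

lemma hom_sum: "e (\<Sum>i\<in>A. f i) = (\<Sum>i\<in>A. e (f i))"
  by (induction A rule: infinite_finite_induct) (simp_all add: hom_zero hom_add)

lemma hom_if_0: "e (if P then a else 0) = (if P then e a else 0)"
  by (simp add: hom_zero)

lemma central_left: "r * (e a * s) = e a * (r * s)"
  by (metis central mult.assoc)

lemma hom_mult_left: "e a * (e b * s) = e (a * b) * s"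
  by (simp add: hom_mult mult.assoc)

lemma intertwine_scaled: "A * a = a * B \<Longrightarrow> A * (e w * a) = (e w * a) * B"
  by (simp add: central_left mult.assoc)

lemma half_double: "e (1/2) * (2 * t) = t"
  using hom_mult_left[of "1/2" 2 t] by (simp add: hom_numeral hom_one)

lemma double_half: "2 * (e (1/2) * t) = t"
  by (simp add: central_left[of 2] half_double)

lemma half_double_left: "e (1/2) * (r * (2 * t)) = r * t"
  by (simp only: mult_double_right[of r] half_double)

lemma central_double_left: "r * (e w * (2 * t)) = e w * (2 * (r * t))"
  by (simp only: central_left[of r] mult_double_right[of r])

lemma ev_superset:
  assumes "finite A" "{w. f w \<noteq> 0} \<subseteq> A"
  shows "ev e g f = (\<Sum>w\<in>A. e (f w) * prod_list (map g w))"
  unfolding ev_def by (rule sum.mono_neutral_left) (use assms hom_zero in auto)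

lemma ev_fadd:
  assumes "fin_supp f" "fin_supp h"
  shows "ev e g (fadd f h) = ev e g f + ev e g h"
proof -
  let ?A = "{w. f w \<noteq> 0} \<union> {w. h w \<noteq> 0}"
  have A: "finite ?A" using assms by (simp add: fin_supp_def)
  have "ev e g (fadd f h) = (\<Sum>w\<in>?A. e (fadd f h w) * prod_list (map g w))"
    by (rule ev_superset[OF A]) (auto simp: fadd_def)
  also have "\<dots> = ev e g f + ev e g h"
    by (simp add: fadd_def hom_add distrib_right sum.distrib ev_superset[OF A])
  finally show ?thesis .
qed

lemma ev_fsmul:
  assumes "fin_supp f"
  shows "ev e g (fsmul c f) = e c * ev e g f"
proof -
  let ?A = "{w. f w \<noteq> 0}"
  have A: "finite ?A" using assms by (simp add: fin_supp_def)
  have "ev e g (fsmul c f) = (\<Sum>w\<in>?A. e (fsmul c f w) * prod_list (map g w))"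
    by (rule ev_superset[OF A]) (auto simp: fsmul_def)
  also have "\<dots> = e c * ev e g f"
    by (simp add: fsmul_def hom_mult sum_distrib_left ev_superset[OF A] mult.assoc)
  finally show ?thesis .
qed

lemma ev_fword: "ev e g (fword u) = prod_list (map g u)"
  by (subst ev_superset[of "{u}"]) (auto simp: fword_def hom_one)

lemma ev_sum:
  "(\<And>i. i \<in> A \<Longrightarrow> fin_supp (f i)) \<Longrightarrow> ev e g (\<lambda>w. \<Sum>i\<in>A. f i w) = (\<Sum>i\<in>A. ev e g (f i))"
proof (induction A rule: infinite_finite_induct)
  case (insert a A)
  have "(\<lambda>w. \<Sum>i\<in>insert a A. f i w) = fadd (f a) (\<lambda>w. \<Sum>i\<in>A. f i w)"
    using insert.hyps by (simp add: fadd_def fun_eq_iff)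
  moreover have "ev e g (\<lambda>w. \<Sum>i\<in>A. f i w) = (\<Sum>i\<in>A. ev e g (f i))"
    using insert.IH insert.prems by blast
  ultimately show ?case
    using insert.hyps insert.prems by (simp add: ev_fadd fin_supp_sum)
qed (simp_all add: ev_def)

lemma ev_H_fa: "ev e g (H_fa n) = Ho n e g"
proof -
  have "ev e g (H_fa n)
      = e (-1/2) * (\<Sum>i\<in>{1..n}. ev e g (fadd (fword [Dg i, Xg i]) (fword [Xg i, Dg i])))"
    unfolding H_fa_eq
    by (simp add: ev_fsmul ev_sum fin_supp_sum fin_supp_fadd fin_supp_fword)
  also have "\<dots> = Ho n e g"
    by (simp add: Ho_def ev_fadd fin_supp_fword ev_fword dlow_def xup_def)
  finally show ?thesis .
qed

end

section \<open>The defining relations hold in the localization\<close>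

lemma is_localization_central_hom: "is_localization n eta e g \<Longrightarrow> central_hom e"
  unfolding is_localization_def central_hom_def by blast

lemma is_localization_rels_vanish:
  assumes "is_localization n eta e g" "r \<in> rels n eta" "fin_fa n r"
  shows "ev e g r = 0"
proof -
  have "fone \<in> S_fa n" unfolding S_fa_def by (rule CollectI, rule exI[of _ "[]"]) simp
  moreover have "fmul r fone \<in> ideal_gen n (rels n eta)"
    by (simp add: fmul_fone_right assms(2) ideal_gen.base)
  ultimately show ?thesis using assms unfolding is_localization_def by blast
qed

lemma is_localization_relations:
  assumes L: "is_localization n eta e g" and i: "i \<in> {1..n}" and j: "j \<in> {1..n}"
  shows "xup g i * xup g j = xup g j * xup g i"
    "dlow g i * dlow g j = dlow g j * dlow g i"
    "dlow g i * xup g j = xup g j * dlow g i + (if i = j then 1 else 0)"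
    "gup g i * xup g j = xup g j * gup g i"
    "gup g i * dlow g j = dlow g j * gup g i"
    "gup g i * gup g j + gup g j * gup g i = e (2 * eta i j)"
proof -
  interpret central_hom e using is_localization_central_hom[OF L] .
  define R where "R = {
      fadd (fmul (fgen (Xg i)) (fgen (Xg j))) (fsmul (-1) (fmul (fgen (Xg j)) (fgen (Xg i)))),
      fadd (fmul (fgen (Dg i)) (fgen (Dg j))) (fsmul (-1) (fmul (fgen (Dg j)) (fgen (Dg i)))),
      fadd (fadd (fmul (fgen (Dg i)) (fgen (Xg j))) (fsmul (-1) (fmul (fgen (Xg j)) (fgen (Dg i)))))
           (fsmul (- (if i = j then 1 else 0)) fone),
      fadd (fmul (fgen (Gg i)) (fgen (Xg j))) (fsmul (-1) (fmul (fgen (Xg j)) (fgen (Gg i)))),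
      fadd (fmul (fgen (Gg i)) (fgen (Dg j))) (fsmul (-1) (fmul (fgen (Dg j)) (fgen (Gg i)))),
      fadd (fadd (fmul (fgen (Gg i)) (fgen (Gg j))) (fmul (fgen (Gg j)) (fgen (Gg i))))
           (fsmul (- 2 * eta i j) fone) }"
  have "R \<subseteq> rels n eta"
    unfolding R_def rels_def using i j by blast
  moreover have "\<forall>r\<in>R. fin_fa n r"
    unfolding R_def using i j
    by (simp add: fmul_fgen_fgen fone_eq_fword fin_fa_fadd fin_fa_fsmul fin_fa_fword)
  ultimately have "\<forall>r\<in>R. ev e g r = 0"
    using is_localization_rels_vanish[OF L] by blast
  then have "g (Xg i) * g (Xg j) = g (Xg j) * g (Xg i)
    \<and> g (Dg i) * g (Dg j) = g (Dg j) * g (Dg i)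
    \<and> g (Dg i) * g (Xg j) = g (Xg j) * g (Dg i) + (if i = j then 1 else 0)
    \<and> g (Gg i) * g (Xg j) = g (Xg j) * g (Gg i)
    \<and> g (Gg i) * g (Dg j) = g (Dg j) * g (Gg i)
    \<and> g (Gg i) * g (Gg j) + g (Gg j) * g (Gg i) = e (2 * eta i j)"
    unfolding R_def
    by (simp add: fmul_fgen_fgen fone_eq_fword ev_fadd ev_fsmul ev_fword fin_supp_fadd
        fin_supp_fsmul fin_supp_fword hom_uminus hom_one hom_zero algebra_simps
        eq_neg_iff_add_eq_0 split: if_splits)
  then show "xup g i * xup g j = xup g j * xup g i"
    "dlow g i * dlow g j = dlow g j * dlow g i"
    "dlow g i * xup g j = xup g j * dlow g i + (if i = j then 1 else 0)"
    "gup g i * xup g j = xup g j * gup g i"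
    "gup g i * dlow g j = dlow g j * gup g i"
    "gup g i * gup g j + gup g j * gup g i = e (2 * eta i j)"
    by (simp_all add: xup_def dlow_def gup_def)
qed

lemma is_localization_H_shift_unit:
  assumes L: "is_localization n eta e g"
  shows "is_unit_r (Ho n e g + of_int k)"
proof -
  interpret central_hom e using is_localization_central_hom[OF L] .
  let ?s = "foldr (\<lambda>k acc. fmul (fadd (H_fa n) (fsmul (of_int k) fone)) acc) [k] fone"
  have "?s \<in> S_fa n" unfolding S_fa_def by blast
  moreover have "?s = fadd (H_fa n) (fsmul (of_int k) (fword []))"
    by (simp add: fmul_fone_right, simp add: fone_eq_fword)
  then have "ev e g ?s = Ho n e g + of_int k"
    by (simp add: ev_fadd ev_fsmul fin_supp_fsmul fin_supp_fword fin_supp_H_fa ev_H_fa ev_fword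
        hom_of_int)
  ultimately show ?thesis using L unfolding is_localization_def by metis
qed

section \<open>Rings satisfying the relations of W(2n|n)\<close>

(* Keeps {1..n} from being rewritten to {Suc 0..n}, where the hypotheses i \<in> {1..n} of the
   commutation rules would no longer match. *)
declare One_nat_def [simp del]

locale weyl_clifford = central_hom e
  for n :: nat and eta etainv :: "nat \<Rightarrow> nat \<Rightarrow> complex"
    and e :: "complex \<Rightarrow> 'r::ring_1" and g :: "gen \<Rightarrow> 'r" +
  assumes eta_symmetric: "\<forall>a\<in>{1..n}. \<forall>b\<in>{1..n}. eta a b = eta b a"
    and eta_etainv: "\<forall>a\<in>{1..n}. \<forall>c\<in>{1..n}.
      (\<Sum>b\<in>{1..n}. eta a b * etainv b c) = (if a = c then 1 else 0)"
    and xx_comm: "\<And>i j. i \<in> {1..n} \<Longrightarrow> j \<in> {1..n} \<Longrightarrow> xup g i * xup g j = xup g j * xup g i"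
    and dd_comm: "\<And>i j. i \<in> {1..n} \<Longrightarrow> j \<in> {1..n} \<Longrightarrow> dlow g i * dlow g j = dlow g j * dlow g i"
    and dx_comm: "\<And>i j. i \<in> {1..n} \<Longrightarrow> j \<in> {1..n} \<Longrightarrow>
      dlow g i * xup g j = xup g j * dlow g i + (if i = j then 1 else 0)"
    and gx_comm: "\<And>i j. i \<in> {1..n} \<Longrightarrow> j \<in> {1..n} \<Longrightarrow> gup g i * xup g j = xup g j * gup g i"
    and gd_comm: "\<And>i j. i \<in> {1..n} \<Longrightarrow> j \<in> {1..n} \<Longrightarrow> gup g i * dlow g j = dlow g j * gup g i"
    and gg_anticomm: "\<And>i j. i \<in> {1..n} \<Longrightarrow> j \<in> {1..n} \<Longrightarrow>
      gup g i * gup g j + gup g j * gup g i = e (2 * eta i j)"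
    and H_shift_unit: "is_unit_r (Ho n e g + of_int k)"
begin

abbreviation "idx \<equiv> {1..n}"
abbreviation "x \<equiv> xup g"
abbreviation "d \<equiv> dlow g"
abbreviation "\<gamma> \<equiv> gup g"
abbreviation "xl \<equiv> xlow n etainv e g"
abbreviation "du \<equiv> dup n eta e g"
abbreviation "gl \<equiv> glow n etainv e g"
abbreviation "X \<equiv> Xo n e g"
abbreviation "Y \<equiv> Yo n etainv e g"
abbreviation "H \<equiv> Ho n e g"
abbreviation "F \<equiv> Fo n etainv e g"
abbreviation "c \<equiv> e (\<i> / complex_of_real (sqrt 2))"
abbreviation "Hinv k \<equiv> rinv (H + of_int k)"
abbreviation "euler \<equiv> \<Sum>l\<in>idx. x l * d l"
abbreviation "dslash \<equiv> \<Sum>l\<in>idx. \<gamma> l * d l"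
abbreviation "xslash \<equiv> \<Sum>l\<in>idx. \<gamma> l * xl l"

lemma eta_swap: "a \<in> idx \<Longrightarrow> b \<in> idx \<Longrightarrow> eta a b = eta b a"
  using eta_symmetric by blast

lemma etainv_swap: "a \<in> idx \<Longrightarrow> b \<in> idx \<Longrightarrow> etainv a b = etainv b a"
  by (rule inverse_of_symmetric_symmetric[OF eta_symmetric eta_etainv])

lemma X_eq: "X = c * dslash"
  by (simp add: Xo_def)

lemma Y_eq: "Y = c * xslash"
  by (simp add: Yo_def)

lemma c_c: "c * (c * t) = - (e (1/2) * t)"
proof -
  have "(complex_of_real (sqrt 2))\<^sup>2 = 2" by (simp flip: of_real_power)
  then have "\<i> / complex_of_real (sqrt 2) * (\<i> / complex_of_real (sqrt 2)) = - (1/2)"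
    by (simp add: power2_eq_square[symmetric] power_divide)
  then show ?thesis by (simp add: hom_mult_left hom_uminus)
qed

lemma c_c_double: "c * (c * (2 * t)) = - t"
  by (simp add: c_c half_double)

lemma c_double_c: "c * (2 * (c * t)) = - t"
  by (simp only: central_left[of 2] c_c_double)

lemma euler_x:
  assumes j: "j \<in> idx"
  shows "euler * x j = x j * euler + x j"
proof -
  have "x l * d l * x j = x j * (x l * d l) + (if l = j then x j else 0)" if l: "l \<in> idx" for l
  proof -
    have "x l * d l * x j = x l * (x j * d l + (if l = j then 1 else 0))"
      by (simp add: mult.assoc dx_comm[OF l j])
    also have "\<dots> = x j * (x l * d l) + (if l = j then x j else 0)"
      by (simp add: distrib_left xx_comm[OF l j] flip: mult.assoc)
    finally show ?thesis .
  qed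
  then have "euler * x j = (\<Sum>l\<in>idx. x j * (x l * d l) + (if l = j then x j else 0))"
    by (simp add: sum_distrib_right)
  also have "\<dots> = x j * euler + x j"
    using j by (simp add: sum.distrib sum_distrib_left)
  finally show ?thesis .
qed

lemma euler_d:
  assumes j: "j \<in> idx"
  shows "euler * d j = d j * euler - d j"
proof -
  have "x l * d l * d j = d j * (x l * d l) - (if l = j then d j else 0)" if l: "l \<in> idx" for l
  proof -
    have "x l * d l * d j = (x l * d j) * d l"
      by (simp add: mult.assoc dd_comm[OF l j])
    also have "\<dots> = (d j * x l - (if j = l then 1 else 0)) * d l"
      using dx_comm[OF j l] by (simp add: algebra_simps)
    also have "\<dots> = d j * (x l * d l) - (if l = j then d j else 0)"
      by (auto simp: left_diff_distrib mult.assoc)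
    finally show ?thesis .
  qed
  then have "euler * d j = (\<Sum>l\<in>idx. d j * (x l * d l) - (if l = j then d j else 0))"
    by (simp add: sum_distrib_right)
  also have "\<dots> = d j * euler - d j"
    using j by (simp add: sum_subtractf sum_distrib_left)
  finally show ?thesis .
qed

lemma euler_g:
  assumes j: "j \<in> idx"
  shows "euler * \<gamma> j = \<gamma> j * euler"
proof (rule sum_intertwine[symmetric])
  fix l assume l: "l \<in> idx"
  have "x l * d l * \<gamma> j = x l * (\<gamma> j * d l)" by (simp add: mult.assoc gd_comm[OF j l])
  also have "\<dots> = \<gamma> j * (x l * d l)" by (simp add: gx_comm[OF j l] flip: mult.assoc)
  finally show "\<gamma> j * (x l * d l) = x l * d l * \<gamma> j" by simp
qed

lemma H_euler: "H = e (- of_nat n / 2) - euler"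
proof -
  have "(\<Sum>l\<in>idx. d l * x l + x l * d l) = (\<Sum>l\<in>idx. 2 * (x l * d l) + 1)"
    by (rule sum.cong) (simp_all add: dx_comm mult_2)
  also have "\<dots> = 2 * euler + of_nat n"
    by (simp add: sum.distrib sum_distrib_left)
  finally have "H = e (-1/2) * (2 * euler) + e (-1/2) * e (of_nat n)"
    by (simp add: Ho_def distrib_left hom_of_nat)
  also have "\<dots> = e (- of_nat n / 2) - euler"
    by (simp add: half_double hom_uminus hom_mult_left[of "-1/2", symmetric] flip: hom_mult)
  finally show ?thesis .
qed

lemma H_x:
  assumes j: "j \<in> idx"
  shows "H * x j = x j * (H - 1)"
  by (simp add: H_euler left_diff_distrib right_diff_distrib euler_x[OF j] central[of _ "x j"])

lemma H_d:
  assumes j: "j \<in> idx"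
  shows "H * d j = d j * (H + 1)"
  by (simp add: H_euler left_diff_distrib right_diff_distrib distrib_left euler_d[OF j]
      central[of _ "d j"])

lemma H_g:
  assumes j: "j \<in> idx"
  shows "H * \<gamma> j = \<gamma> j * H"
  by (simp add: H_euler left_diff_distrib right_diff_distrib euler_g[OF j] central[of _ "\<gamma> j"])

lemma Hinv_x: "j \<in> idx \<Longrightarrow> Hinv k * x j = x j * Hinv (k - 1)"
  by (rule rinv_intertwine[OF H_shift_unit H_shift_unit])
    (simp add: distrib_left distrib_right H_x mult_of_int_commute algebra_simps)

lemma Hinv_d: "j \<in> idx \<Longrightarrow> Hinv k * d j = d j * Hinv (k + 1)"
  by (rule rinv_intertwine[OF H_shift_unit H_shift_unit])
    (simp add: distrib_left distrib_right H_d mult_of_int_commute algebra_simps)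

lemma Hinv_g: "j \<in> idx \<Longrightarrow> Hinv k * \<gamma> j = \<gamma> j * Hinv k"
  by (rule rinv_intertwine[OF H_shift_unit H_shift_unit])
    (simp add: distrib_left distrib_right H_g mult_of_int_commute)

lemma Hinv_xl: "Hinv k * xl i = xl i * Hinv (k - 1)"
  unfolding xlow_def by (intro sum_intertwine intertwine_scaled Hinv_x)

lemma Hinv_gl: "Hinv k * gl i = gl i * Hinv k"
  unfolding glow_def by (intro sum_intertwine intertwine_scaled Hinv_g)

lemma Hinv_Y: "Hinv k * Y = Y * Hinv (k - 1)"
  unfolding Y_eq by (intro intertwine_scaled sum_intertwine mult_intertwine[OF Hinv_g Hinv_xl])

lemma Hinv_F: "Hinv k * F = F * Hinv (k - 2)"
proof -
  have "Hinv k * (x l * xl l) = (x l * xl l) * Hinv (k - 1 - 1)" if "l \<in> idx" for l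
    by (rule mult_intertwine[OF Hinv_x[OF that] Hinv_xl])
  then show ?thesis
    unfolding Fo_def by (intro intertwine_scaled sum_intertwine) simp
qed

lemma X_x:
  assumes j: "j \<in> idx"
  shows "X * x j = x j * X + c * \<gamma> j"
proof -
  have "\<gamma> l * d l * x j = x j * (\<gamma> l * d l) + (if l = j then \<gamma> j else 0)" if l: "l \<in> idx" for l
  proof -
    have "\<gamma> l * d l * x j = \<gamma> l * (x j * d l + (if l = j then 1 else 0))"
      by (simp add: mult.assoc dx_comm[OF l j])
    also have "\<dots> = x j * (\<gamma> l * d l) + (if l = j then \<gamma> j else 0)"
      by (simp add: distrib_left gx_comm[OF l j] flip: mult.assoc)
    finally show ?thesis .
  qed
  then have "dslash * x j = (\<Sum>l\<in>idx. x j * (\<gamma> l * d l) + (if l = j then \<gamma> j else 0))"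
    by (simp add: sum_distrib_right)
  also have "\<dots> = x j * dslash + \<gamma> j"
    using j by (simp add: sum.distrib sum_distrib_left)
  finally show ?thesis
    by (simp add: X_eq mult.assoc distrib_left central_left)
qed

lemma X_d:
  assumes j: "j \<in> idx"
  shows "X * d j = d j * X"
proof -
  have "d j * dslash = dslash * d j"
  proof (rule sum_intertwine)
    fix l assume l: "l \<in> idx"
    show "d j * (\<gamma> l * d l) = \<gamma> l * d l * d j"
      by (rule mult_intertwine[OF gd_comm[OF l j, symmetric] dd_comm[OF j l]])
  qed
  then show ?thesis by (simp add: X_eq mult.assoc central_left)
qed

lemma X_du: "X * du j = du j * X"
  unfolding dup_def by (intro sum_intertwine intertwine_scaled X_d)

lemma X_g:
  assumes j: "j \<in> idx"
  shows "X * \<gamma> j = c * (2 * du j) - \<gamma> j * X"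
proof -
  have "\<gamma> l * d l * \<gamma> j = 2 * (e (eta j l) * d l) - \<gamma> j * (\<gamma> l * d l)" if l: "l \<in> idx" for l
  proof -
    have anticomm: "\<gamma> l * \<gamma> j = e (2 * eta j l) - \<gamma> j * \<gamma> l"
      using gg_anticomm[OF l j] eta_swap[OF l j] by (simp add: eq_diff_eq)
    have "\<gamma> l * d l * \<gamma> j = (\<gamma> l * \<gamma> j) * d l"
      by (simp add: mult.assoc gd_comm[OF j l])
    also have "\<dots> = (e (2 * eta j l) - \<gamma> j * \<gamma> l) * d l"
      by (simp only: anticomm)
    also have "\<dots> = 2 * (e (eta j l) * d l) - \<gamma> j * (\<gamma> l * d l)"
      by (simp add: left_diff_distrib hom_mult hom_numeral mult.assoc)
    finally show ?thesis .
  qed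
  then have "dslash * \<gamma> j = (\<Sum>l\<in>idx. 2 * (e (eta j l) * d l) - \<gamma> j * (\<gamma> l * d l))"
    by (simp add: sum_distrib_right)
  also have "\<dots> = 2 * du j - \<gamma> j * dslash"
    by (simp add: sum_subtractf sum_distrib_left dup_def)
  finally show ?thesis
    by (simp add: X_eq mult.assoc right_diff_distrib central_left)
qed

lemma X_X_x:
  assumes j: "j \<in> idx"
  shows "X * (X * x j) = x j * X * X - du j"
proof -
  have "X * (X * x j) = X * (x j * X + c * \<gamma> j)"
    by (simp only: X_x[OF j])
  also have "\<dots> = (X * x j) * X + c * (X * \<gamma> j)"
    by (simp only: distrib_left central_left mult.assoc)
  also have "\<dots> = (x j * X + c * \<gamma> j) * X + c * (c * (2 * du j) - \<gamma> j * X)"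
    by (simp only: X_x[OF j] X_g[OF j])
  also have "\<dots> = x j * X * X - du j"
    by (simp only: distrib_right right_diff_distrib c_c_double mult.assoc) (simp add: algebra_simps)
  finally show ?thesis .
qed

lemma X_pow2_g:
  assumes j: "j \<in> idx"
  shows "X ^ 2 * \<gamma> j = (\<gamma> j * X) * X"
proof -
  have "X ^ 2 * \<gamma> j = X * (c * (2 * du j) - \<gamma> j * X)"
    by (simp only: power2_eq_square mult.assoc X_g[OF j])
  also have "\<dots> = c * (2 * (du j * X)) - (X * \<gamma> j) * X"
    by (simp only: right_diff_distrib central_left mult_double_right[of X] X_du mult.assoc)
  also have "\<dots> = c * (2 * (du j * X)) - (c * (2 * du j) - \<gamma> j * X) * X"
    by (simp only: X_g[OF j])
  also have "\<dots> = (\<gamma> j * X) * X"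
    by (simp add: left_diff_distrib mult.assoc)
  finally show ?thesis .
qed

lemma X_pow3_x:
  assumes j: "j \<in> idx"
  shows "X ^ 3 * x j = (X * x j * X - du j) * X"
proof -
  have "X ^ 3 * x j = X * (X * (X * x j))"
    by (simp add: power3_eq_cube mult.assoc)
  also have "\<dots> = (X * x j * X - du j) * X"
    by (simp add: X_X_x[OF j] right_diff_distrib left_diff_distrib X_du mult.assoc)
  finally show ?thesis .
qed

lemma d_xl:
  assumes i: "i \<in> idx"
  shows "d i * xl l = xl l * d i + e (etainv l i)"
proof -
  have "d i * (e (etainv l m) * x m)
      = e (etainv l m) * x m * d i + (if m = i then e (etainv l m) else 0)" if m: "m \<in> idx" for m
    by (simp add: central_left dx_comm[OF i m] distrib_left mult.assoc)
  then have "d i * xl l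
      = (\<Sum>m\<in>idx. e (etainv l m) * x m * d i + (if m = i then e (etainv l m) else 0))"
    by (simp add: xlow_def sum_distrib_left)
  also have "\<dots> = xl l * d i + e (etainv l i)"
    using i by (simp add: sum.distrib xlow_def sum_distrib_right)
  finally show ?thesis .
qed

lemma g_xl: "i \<in> idx \<Longrightarrow> \<gamma> i * xl l = xl l * \<gamma> i"
  unfolding xlow_def by (intro sum_intertwine intertwine_scaled gx_comm)

lemma x_xl: "i \<in> idx \<Longrightarrow> x i * xl l = xl l * x i"
  unfolding xlow_def by (intro sum_intertwine intertwine_scaled xx_comm)

lemma sum_eta_xl:
  assumes i: "i \<in> idx"
  shows "(\<Sum>l\<in>idx. e (eta i l) * xl l) = x i"
proof -
  have "(\<Sum>l\<in>idx. e (eta i l) * xl l) = (\<Sum>l\<in>idx. \<Sum>m\<in>idx. e (eta i l * etainv l m) * x m)"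
    by (simp add: xlow_def sum_distrib_left hom_mult_left)
  also have "\<dots> = (\<Sum>m\<in>idx. \<Sum>l\<in>idx. e (eta i l * etainv l m) * x m)"
    by (rule sum.swap)
  also have "\<dots> = (\<Sum>m\<in>idx. e (\<Sum>l\<in>idx. eta i l * etainv l m) * x m)"
    by (simp add: hom_sum sum_distrib_right)
  also have "\<dots> = (\<Sum>m\<in>idx. if m = i then x m else 0)"
    using eta_etainv i by (intro sum.cong) (auto simp: hom_one hom_zero)
  also have "\<dots> = x i"
    using i by simp
  finally show ?thesis .
qed

lemma Y_comm_scaled:
  assumes "a * Y = Y * a' + c * w"
  shows "(e v * a) * Y = Y * (e v * a') + c * (e v * w)"
  using assms by (simp add: mult.assoc distrib_left central_left[of Y] central_left[of c])

lemma Y_comm_sum: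
  assumes "\<And>l. l \<in> S \<Longrightarrow> a l * Y = Y * a' l + c * w l"
  shows "(\<Sum>l\<in>S. a l) * Y = Y * (\<Sum>l\<in>S. a' l) + c * (\<Sum>l\<in>S. w l)"
  using assms by (simp add: sum_distrib_left sum_distrib_right sum.distrib cong: sum.cong)

lemma d_Y:
  assumes i: "i \<in> idx"
  shows "d i * Y = Y * d i + c * gl i"
proof -
  have "d i * (\<gamma> l * xl l) = \<gamma> l * xl l * d i + e (etainv i l) * \<gamma> l" if l: "l \<in> idx" for l
  proof -
    have "d i * (\<gamma> l * xl l) = \<gamma> l * (d i * xl l)"
      by (simp add: gd_comm[OF l i] flip: mult.assoc)
    also have "\<dots> = \<gamma> l * xl l * d i + e (etainv i l) * \<gamma> l"
      by (simp add: d_xl[OF i] distrib_left mult.assoc etainv_swap[OF l i] central)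
    finally show ?thesis .
  qed
  then have "d i * xslash = xslash * d i + gl i"
    by (simp add: sum_distrib_left sum_distrib_right sum.distrib glow_def)
  then show ?thesis
    by (simp add: Y_eq mult.assoc distrib_left central_left[of "d i"])
qed

lemma g_Y:
  assumes i: "i \<in> idx"
  shows "\<gamma> i * Y = Y * (- \<gamma> i) + c * (2 * x i)"
proof -
  have "\<gamma> i * (\<gamma> l * xl l) = 2 * (e (eta i l) * xl l) - \<gamma> l * xl l * \<gamma> i" if l: "l \<in> idx" for l
  proof -
    have anticomm: "\<gamma> i * \<gamma> l = e (2 * eta i l) - \<gamma> l * \<gamma> i"
      using gg_anticomm[OF i l] by (simp add: eq_diff_eq)
    have "\<gamma> i * (\<gamma> l * xl l) = (e (2 * eta i l) - \<gamma> l * \<gamma> i) * xl l"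
      by (simp only: anticomm flip: mult.assoc)
    also have "\<dots> = 2 * (e (eta i l) * xl l) - \<gamma> l * xl l * \<gamma> i"
      by (simp add: left_diff_distrib hom_mult hom_numeral mult.assoc g_xl[OF i])
    finally show ?thesis .
  qed
  then have "\<gamma> i * xslash = 2 * x i - xslash * \<gamma> i"
    by (simp add: sum_distrib_left sum_distrib_right sum_subtractf sum_eta_xl[OF i]
        flip: sum_distrib_left[of 2])
  then show ?thesis
    by (simp add: Y_eq mult.assoc right_diff_distrib central_left[of "\<gamma> i"])
qed

lemma x_Y:
  assumes i: "i \<in> idx"
  shows "x i * Y = Y * x i"
proof -
  have "x i * xslash = xslash * x i"
    by (intro sum_intertwine mult_intertwine[OF gx_comm[symmetric] x_xl[OF i]]) (use i in auto)
  then show ?thesis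
    by (simp add: Y_eq mult.assoc central_left[of "x i"])
qed

lemma gl_Y: "gl i * Y = Y * (- gl i) + c * (2 * xl i)"
proof -
  have "gl i * Y = Y * (\<Sum>l\<in>idx. e (etainv i l) * (- \<gamma> l))
      + c * (\<Sum>l\<in>idx. e (etainv i l) * (2 * x l))"
    unfolding glow_def by (intro Y_comm_sum Y_comm_scaled g_Y)
  then show ?thesis
    by (simp add: glow_def xlow_def sum_negf mult_double_right[of "e _"] sum_distrib_left[of 2])
qed

lemma xl_Y: "xl i * Y = Y * xl i"
proof -
  have "Y * xl i = xl i * Y"
    unfolding xlow_def by (intro sum_intertwine intertwine_scaled x_Y[symmetric])
  then show ?thesis ..
qed

subsection \<open>The subspace II\<close>

abbreviation "\<I> \<equiv> II n eta etainv e g"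

lemma II_memI: "Y * p + F * q + r * X + s * Eo n eta e g \<in> \<I>"
  unfolding II_def by blast

lemma II_Y: "Y * p \<in> \<I>"
  using II_memI[of p 0 0 0] by simp

lemma II_X: "p * X \<in> \<I>"
  using II_memI[of 0 0 p 0] by simp

lemma II_zero: "0 \<in> \<I>"
  using II_Y[of 0] by simp

lemma II_add:
  assumes "p \<in> \<I>" "q \<in> \<I>"
  shows "p + q \<in> \<I>"
proof -
  obtain a1 b1 c1 d1 a2 b2 c2 d2 where
    "p = Y * a1 + F * b1 + c1 * X + d1 * Eo n eta e g"
    "q = Y * a2 + F * b2 + c2 * X + d2 * Eo n eta e g"
    using assms unfolding II_def by blast
  then have "p + q = Y * (a1 + a2) + F * (b1 + b2) + (c1 + c2) * X + (d1 + d2) * Eo n eta e g"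
    by (simp add: algebra_simps)
  then show ?thesis by (simp add: II_memI)
qed

lemma II_left_mult:
  assumes "t * Y = Y * tY" "t * F = F * tF" "p \<in> \<I>"
  shows "t * p \<in> \<I>"
proof -
  obtain a b r s where "p = Y * a + F * b + r * X + s * Eo n eta e g"
    using assms(3) unfolding II_def by blast
  then have "t * p = Y * (tY * a) + F * (tF * b) + (t * r) * X + (t * s) * Eo n eta e g"
    by (simp add: distrib_left assms(1,2) flip: mult.assoc)
  then show ?thesis by (simp add: II_memI)
qed

lemma II_scaled: "p \<in> \<I> \<Longrightarrow> e w * p \<in> \<I>"
  by (rule II_left_mult[OF central central])

lemma II_uminus: "p \<in> \<I> \<Longrightarrow> - p \<in> \<I>"
  using II_scaled[of p "-1"] by (simp add: hom_uminus hom_one)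

lemma II_diff: "p \<in> \<I> \<Longrightarrow> q \<in> \<I> \<Longrightarrow> p - q \<in> \<I>"
  unfolding diff_conv_add_uminus by (intro II_add II_uminus)

lemma II_double: "p \<in> \<I> \<Longrightarrow> 2 * p \<in> \<I>"
  by (simp add: mult_2 II_add)

lemma II_sum: "(\<And>k. k \<in> S \<Longrightarrow> f k \<in> \<I>) \<Longrightarrow> sum f S \<in> \<I>"
  by (induction S rule: infinite_finite_induct) (simp_all add: II_zero II_add)

lemma II_Hinv: "p \<in> \<I> \<Longrightarrow> Hinv k * p \<in> \<I>"
  by (rule II_left_mult[OF Hinv_Y Hinv_F])

definition equiv_II :: "'r \<Rightarrow> 'r \<Rightarrow> bool" (infix "\<approx>" 50) where
  "p \<approx> q \<longleftrightarrow> p - q \<in> \<I>"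

lemma equiv_II_refl: "p \<approx> p"
  by (simp add: equiv_II_def II_zero)

lemma equiv_II_trans [trans]: "p \<approx> q \<Longrightarrow> q \<approx> r \<Longrightarrow> p \<approx> r"
  unfolding equiv_II_def using II_add[of "p - q" "q - r"] by simp

lemma equiv_II_add: "p \<approx> p' \<Longrightarrow> q \<approx> q' \<Longrightarrow> p + q \<approx> p' + q'"
  unfolding equiv_II_def using II_add[of "p - p'" "q - q'"] by (simp add: algebra_simps)

lemma equiv_II_diff: "p \<approx> p' \<Longrightarrow> q \<approx> q' \<Longrightarrow> p - q \<approx> p' - q'"
  unfolding equiv_II_def using II_diff[of "p - p'" "q - q'"] by (simp add: algebra_simps)

lemma equiv_II_scaled: "p \<approx> q \<Longrightarrow> e w * p \<approx> e w * q"
  unfolding equiv_II_def using II_scaled[of "p - q" w] by (simp add: right_diff_distrib)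

lemma equiv_II_Hinv: "p \<approx> q \<Longrightarrow> Hinv k * p \<approx> Hinv k * q"
  unfolding equiv_II_def using II_Hinv[of "p - q" k] by (simp add: right_diff_distrib)

lemma equiv_II_sum: "(\<And>k. k \<in> S \<Longrightarrow> f k \<approx> f' k) \<Longrightarrow> sum f S \<approx> sum f' S"
  unfolding equiv_II_def using II_sum[of S "\<lambda>k. f k - f' k"] by (simp add: sum_subtractf)

lemma equiv_II_remainder: "p = q + t \<Longrightarrow> t \<in> \<I> \<Longrightarrow> p \<approx> q"
  by (simp add: equiv_II_def)

lemma mem_II_equiv: "p \<approx> q \<Longrightarrow> q \<in> \<I> \<Longrightarrow> p \<in> \<I>"
  unfolding equiv_II_def using II_add[of "p - q" q] by simp

subsection \<open>The diamond product\<close>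

lemma phi_0: "phi n e g 0 = 1"
  by (simp add: phi_def)

lemma phi_1: "phi n e g 1 = - Hinv 1"
  by (simp add: phi_def kappa_def upt_rec hom_uminus hom_one)

lemma phi_2: "phi n e g 2 = Hinv 1"
proof -
  have "[1..<Suc 2] = [1, 2]" by (simp add: upt_rec)
  then show ?thesis
    by (simp add: phi_def kappa_def hom_uminus hom_one rinv_minus_one)
qed

abbreviation "dia_term \<equiv> dterm n etainv e g"

abbreviation diamond (infixl "\<diamond>" 70) where
  "a \<diamond> b \<equiv> dia n eta etainv e g a b"

lemma dia_term_0: "dia_term a b 0 = a * b"
  by (simp add: dterm_def phi_0)

lemma dia_term_in_II:
  assumes "X ^ m * b = b' * X" "m \<le> k"
  shows "dia_term a b k \<in> \<I>"
proof -
  obtain q where k: "k = q + m" using assms(2) by (metis le_add_diff_inverse2)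
  have "dia_term a b k = (a * phi n e g k * Y ^ k * X ^ q * b') * X"
    using assms(1) by (simp add: dterm_def k power_add mult.assoc)
  then show ?thesis by (simp add: II_X)
qed

(* dia cuts the sum off at an unspecified N chosen by SOME; any admissible cut-off gives the
   same class. *)
lemma dia_partial_sum:
  assumes "\<And>k. K \<le> k \<Longrightarrow> dia_term a b k \<in> \<I>"
  shows "a \<diamond> b \<approx> (\<Sum>k<K. dia_term a b k)"
proof -
  define N where "N = (SOME N. \<forall>k\<ge>N. dia_term a b k \<in> \<I>)"
  have "\<forall>k\<ge>N. dia_term a b k \<in> \<I>"
    unfolding N_def by (rule someI[of _ K]) (use assms in auto)
  then have tail: "(\<Sum>k\<in>{M..<M'}. dia_term a b k) \<in> \<I>" if "N \<le> M \<or> K \<le> M" for M M'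
    using that assms by (intro II_sum) auto
  have dia: "a \<diamond> b = (\<Sum>k<N. dia_term a b k)"
    by (simp add: dia_def N_def Let_def)
  show ?thesis
  proof (cases "N \<le> K")
    case True
    then have "(\<Sum>k<K. dia_term a b k) = (\<Sum>k<N. dia_term a b k) + (\<Sum>k\<in>{N..<K}. dia_term a b k)"
      by (simp add: lessThan_atLeast0 sum.atLeastLessThan_concat)
    then show ?thesis
      unfolding dia equiv_II_def using II_uminus[OF tail[of N K]] by simp
  next
    case False
    then have "(\<Sum>k<N. dia_term a b k) = (\<Sum>k<K. dia_term a b k) + (\<Sum>k\<in>{K..<N}. dia_term a b k)"
      by (simp add: lessThan_atLeast0 sum.atLeastLessThan_concat)
    then show ?thesis
      unfolding dia equiv_II_def using tail[of K N] by simp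
  qed
qed

lemma dia_X_comm:
  assumes "X * b = b * X"
  shows "a \<diamond> b \<approx> a * b"
proof -
  have "a \<diamond> b \<approx> (\<Sum>k<1. dia_term a b k)"
    by (rule dia_partial_sum, rule dia_term_in_II[of 1]) (simp_all add: assms)
  then show ?thesis by (simp add: dia_term_0)
qed

lemma dia_gamma:
  assumes j: "j \<in> idx"
  shows "a \<diamond> \<gamma> j \<approx> a * \<gamma> j - c * (2 * (a * Hinv 1 * Y * du j))"
proof -
  have "a \<diamond> \<gamma> j \<approx> (\<Sum>k<2. dia_term a (\<gamma> j) k)"
    by (intro dia_partial_sum dia_term_in_II[OF X_pow2_g[OF j]])
  also have "(\<Sum>k<2. dia_term a (\<gamma> j) k) = a * \<gamma> j + dia_term a (\<gamma> j) 1"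
    by (simp add: numeral_2_eq_2 dia_term_0 One_nat_def)
  also have "dia_term a (\<gamma> j) 1 = - (a * Hinv 1 * Y * (X * \<gamma> j))"
    by (simp add: dterm_def phi_1 mult.assoc)
  also have "X * \<gamma> j = c * (2 * du j) - \<gamma> j * X"
    by (rule X_g[OF j])
  also have "a * \<gamma> j + - (a * Hinv 1 * Y * (c * (2 * du j) - \<gamma> j * X))
      = (a * \<gamma> j - c * (2 * (a * Hinv 1 * Y * du j))) + (a * Hinv 1 * Y * \<gamma> j) * X"
    by (simp add: right_diff_distrib central_double_left mult.assoc)
  finally show ?thesis
    using II_X equiv_II_remainder equiv_II_trans by blast
qed

lemma dia_x:
  assumes j: "j \<in> idx"
  shows "a \<diamond> x j \<approx> a * x j - c * (a * Hinv 1 * Y * \<gamma> j) - a * Hinv 1 * Y * Y * du j"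
proof -
  have "a \<diamond> x j \<approx> (\<Sum>k<3. dia_term a (x j) k)"
    by (intro dia_partial_sum dia_term_in_II[OF X_pow3_x[OF j]])
  also have "(\<Sum>k<3. dia_term a (x j) k) = a * x j + dia_term a (x j) 1 + dia_term a (x j) 2"
    by (simp add: numeral_3_eq_3 numeral_2_eq_2 dia_term_0 One_nat_def)
  also have "dia_term a (x j) 1 = - (a * Hinv 1 * Y * (X * x j))"
    by (simp add: dterm_def phi_1 mult.assoc)
  also have "dia_term a (x j) 2 = a * Hinv 1 * Y * Y * (X * (X * x j))"
    by (simp add: dterm_def phi_2 power2_eq_square mult.assoc)
  also have "X * (X * x j) = x j * X * X - du j"
    by (rule X_X_x[OF j])
  also have "X * x j = x j * X + c * \<gamma> j"
    by (rule X_x[OF j])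
  also have "a * x j + - (a * Hinv 1 * Y * (x j * X + c * \<gamma> j)) + a * Hinv 1 * Y * Y * (x j * X * X - du j)
      = (a * x j - c * (a * Hinv 1 * Y * \<gamma> j) - a * Hinv 1 * Y * Y * du j)
        + (a * Hinv 1 * Y * Y * x j * X - a * Hinv 1 * Y * x j) * X"
    by (simp only: distrib_left right_diff_distrib central_left[of "a * Hinv 1 * Y"])
      (simp add: algebra_simps)
  finally show ?thesis
    using II_X equiv_II_remainder equiv_II_trans by blast
qed

lemma Hinv_Y_push:
  assumes a_Hinv: "a * Hinv 1 = Hinv k * a" and a_Y: "a * Y = Y * a' + c * w"
  shows "a * Hinv 1 * Y * t = Hinv k * (Y * (a' * t)) + c * (Hinv k * (w * t))"
proof -
  have "a * Hinv 1 * Y * t = Hinv k * ((a * Y) * t)"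
    by (simp only: a_Hinv mult.assoc)
  also have "\<dots> = Hinv k * ((Y * a' + c * w) * t)"
    by (simp only: a_Y)
  also have "\<dots> = Hinv k * (Y * (a' * t)) + c * (Hinv k * (w * t))"
    by (simp only: distrib_right distrib_left central_left[of "Hinv k"] mult.assoc)
  finally show ?thesis .
qed

(* The Y a' part of the correction term lies in Y A', and c (2 (c w)) = -w. *)
lemma dia_gamma_shift:
  assumes j: "j \<in> idx" and a_Hinv: "a * Hinv 1 = Hinv k * a" and a_Y: "a * Y = Y * a' + c * w"
  shows "a \<diamond> \<gamma> j \<approx> a * \<gamma> j + Hinv k * (w * du j)"
proof -
  have "a \<diamond> \<gamma> j \<approx> a * \<gamma> j - c * (2 * (a * Hinv 1 * Y * du j))"
    by (rule dia_gamma[OF j])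
  also have "a * \<gamma> j - c * (2 * (a * Hinv 1 * Y * du j))
      = (a * \<gamma> j + Hinv k * (w * du j)) + - (c * (2 * (Hinv k * (Y * (a' * du j)))))"
    unfolding Hinv_Y_push[OF a_Hinv a_Y]
    by (simp only: distrib_left c_double_c) (simp add: algebra_simps)
  also have "\<dots> \<approx> a * \<gamma> j + Hinv k * (w * du j)"
    by (rule equiv_II_remainder[OF refl]) (intro II_uminus II_scaled II_double II_Hinv II_Y)
  finally show ?thesis .
qed

lemma dia_x_shift:
  assumes j: "j \<in> idx" and a_Hinv: "a * Hinv 1 = Hinv k * a" and a_Y: "a * Y = Y * a' + c * w"
    and w_Y: "w * Y = Y * w' + c * v"
  shows "a \<diamond> x j \<approx> a * x j + e (1/2) * (Hinv k * (w * \<gamma> j + v * du j))"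
proof -
  have "a * Hinv 1 * Y * Y * du j = a * Hinv 1 * Y * (Y * du j)"
    by (simp only: mult.assoc)
  also have "\<dots> = Hinv k * (Y * (a' * (Y * du j))) + c * (Hinv k * (w * (Y * du j)))"
    by (rule Hinv_Y_push[OF a_Hinv a_Y])
  also have "w * (Y * du j) = Y * (w' * du j) + c * (v * du j)"
    by (simp only: mult.assoc[symmetric] w_Y distrib_right)
  also have "Hinv k * (Y * (a' * (Y * du j))) + c * (Hinv k * (Y * (w' * du j) + c * (v * du j)))
      = Hinv k * (Y * (a' * (Y * du j))) + c * (Hinv k * (Y * (w' * du j)))
        + c * (c * (Hinv k * (v * du j)))"
    by (simp only: distrib_left central_left[of "Hinv k"] add.assoc)
  finally have push2: "a * Hinv 1 * Y * Y * du j = \<dots>" .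
  have "a \<diamond> x j \<approx> a * x j - c * (a * Hinv 1 * Y * \<gamma> j) - a * Hinv 1 * Y * Y * du j"
    by (rule dia_x[OF j])
  also have "\<dots> = (a * x j + e (1/2) * (Hinv k * (w * \<gamma> j + v * du j)))
      + (- (c * (Hinv k * (Y * (a' * \<gamma> j)))) - Hinv k * (Y * (a' * (Y * du j)))
         - c * (Hinv k * (Y * (w' * du j))))"
    unfolding push2 unfolding Hinv_Y_push[OF a_Hinv a_Y]
    by (simp only: distrib_left c_c) (simp add: algebra_simps)
  also have "\<dots> \<approx> a * x j + e (1/2) * (Hinv k * (w * \<gamma> j + v * du j))"
    by (rule equiv_II_remainder[OF refl]) (intro II_diff II_uminus II_scaled II_Hinv II_Y)
  finally show ?thesis .
qed

lemma d_Hinv: "i \<in> idx \<Longrightarrow> d i * Hinv 1 = Hinv 0 * d i"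
  using Hinv_d[of i 0] by simp

lemma g_Hinv: "i \<in> idx \<Longrightarrow> \<gamma> i * Hinv 1 = Hinv 1 * \<gamma> i"
  using Hinv_g[of i 1] by simp

lemma x_Hinv: "i \<in> idx \<Longrightarrow> x i * Hinv 1 = Hinv 2 * x i"
  using Hinv_x[of i 2] by simp

lemma gl_Hinv: "gl i * Hinv 1 = Hinv 1 * gl i"
  using Hinv_gl[of 1 i] by simp

lemma dia_x_gamma:
  assumes i: "i \<in> idx" and j: "j \<in> idx"
  shows "x i \<diamond> \<gamma> j \<approx> x i * \<gamma> j"
proof -
  have "x i * Y = Y * x i + c * 0"
    by (simp add: x_Y[OF i])
  from dia_gamma_shift[OF j x_Hinv[OF i] this] show ?thesis
    by simp
qed

lemma dia_comm_d_gamma: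
  assumes i: "i \<in> idx" and j: "j \<in> idx"
  shows "d i \<diamond> \<gamma> j - \<gamma> j \<diamond> d i - rinv H * (gl i \<diamond> du j) \<in> \<I>"
proof -
  have "d i \<diamond> \<gamma> j - \<gamma> j \<diamond> d i - Hinv 0 * (gl i \<diamond> du j)
      \<approx> (d i * \<gamma> j + Hinv 0 * (gl i * du j)) - \<gamma> j * d i - Hinv 0 * (gl i * du j)"
    by (intro equiv_II_diff equiv_II_Hinv dia_X_comm X_du X_d[OF i]
        dia_gamma_shift[OF j d_Hinv[OF i] d_Y[OF i]])
  also have "\<dots> = 0"
    by (simp add: gd_comm[OF j i])
  finally show ?thesis
    using mem_II_equiv II_zero by simp
qed

lemma dia_anticomm_gamma_gamma:
  assumes i: "i \<in> idx" and j: "j \<in> idx"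
  shows "\<gamma> i \<diamond> \<gamma> j + \<gamma> j \<diamond> \<gamma> i
      - (e (2 * eta i j) + e 2 * rinv (H + 1) * (x j \<diamond> du i + x i \<diamond> du j)) \<in> \<I>"
proof -
  have "\<gamma> i \<diamond> \<gamma> j + \<gamma> j \<diamond> \<gamma> i
        - (e (2 * eta i j) + e 2 * (Hinv 1 * (x j \<diamond> du i + x i \<diamond> du j)))
      \<approx> (\<gamma> i * \<gamma> j + Hinv 1 * ((2 * x i) * du j)) + (\<gamma> j * \<gamma> i + Hinv 1 * ((2 * x j) * du i))
        - (e (2 * eta i j) + e 2 * (Hinv 1 * (x j * du i + x i * du j)))"
    by (intro equiv_II_diff equiv_II_add equiv_II_refl equiv_II_scaled equiv_II_Hinv dia_X_comm X_du
        dia_gamma_shift[OF j g_Hinv[OF i] g_Y[OF i]] dia_gamma_shift[OF i g_Hinv[OF j] g_Y[OF j]])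
  also have "\<dots> = 0"
  proof -
    have "\<gamma> j * \<gamma> i = e (2 * eta i j) - \<gamma> i * \<gamma> j"
      using gg_anticomm[OF i j] by (simp add: eq_diff_eq add.commute)
    then show ?thesis
      by (simp add: hom_numeral mult.assoc mult_double_right distrib_left)
  qed
  finally show ?thesis
    using mem_II_equiv II_zero by (simp add: mult.assoc)
qed

lemma dia_comm_d_x:
  assumes i: "i \<in> idx" and j: "j \<in> idx"
  shows "d i \<diamond> x j - x j \<diamond> d i
      - (e (if i = j then 1 else 0) + e (1/2) * rinv H * (gl i \<diamond> \<gamma> j)
         + rinv (H + 1) * (xl i \<diamond> du j)) \<in> \<I>"
proof -
  have "d i \<diamond> x j - x j \<diamond> d i
      - (e (if i = j then 1 else 0) + e (1/2) * (Hinv 0 * (gl i \<diamond> \<gamma> j)) + Hinv 1 * (xl i \<diamond> du j))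
    \<approx> (d i * x j + e (1/2) * (Hinv 0 * (gl i * \<gamma> j + (2 * xl i) * du j))) - x j * d i
      - (e (if i = j then 1 else 0) + e (1/2) * (Hinv 0 * (gl i * \<gamma> j + Hinv 1 * ((2 * xl i) * du j)))
         + Hinv 1 * (xl i * du j))"
    by (intro equiv_II_diff equiv_II_add equiv_II_refl equiv_II_scaled equiv_II_Hinv dia_X_comm
        X_d[OF i] X_du dia_x_shift[OF j d_Hinv[OF i] d_Y[OF i] gl_Y]
        dia_gamma_shift[OF j gl_Hinv gl_Y])
  also have "\<dots> = 0"
  proof -
    have "rinv H * rinv (H + 1) + rinv (H + 1) = rinv H"
      using rinv_add_one H_shift_unit[of 0] H_shift_unit[of 1] by simp
    then have "rinv H * (xl i * du j)
        = rinv H * (rinv (H + 1) * (xl i * du j)) + rinv (H + 1) * (xl i * du j)"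
      by (metis distrib_right mult.assoc)
    then show ?thesis
      by (simp add: dx_comm[OF i j] hom_if_0 hom_one distrib_left mult.assoc mult_double_right
          half_double double_half algebra_simps)
  qed
  finally show ?thesis
    using mem_II_equiv II_zero by (simp add: mult.assoc)
qed

lemma dia_comm_gamma_x:
  assumes i: "i \<in> idx" and j: "j \<in> idx"
  shows "\<gamma> i \<diamond> x j - x j \<diamond> \<gamma> i - rinv (H + 1) * (x i \<diamond> \<gamma> j) \<in> \<I>"
proof -
  have double_x_Y: "(2 * x i) * Y = Y * (2 * x i) + c * 0"
    by (simp add: mult.assoc x_Y[OF i] mult_double_right)
  have "\<gamma> i \<diamond> x j - x j \<diamond> \<gamma> i - Hinv 1 * (x i \<diamond> \<gamma> j)
      \<approx> (\<gamma> i * x j + e (1/2) * (Hinv 1 * ((2 * x i) * \<gamma> j + 0 * du j))) - x j * \<gamma> i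
        - Hinv 1 * (x i * \<gamma> j)"
    using dia_x_shift[OF j g_Hinv[OF i] g_Y[OF i] double_x_Y]
    by (intro equiv_II_diff equiv_II_Hinv dia_x_gamma[OF i j] dia_x_gamma[OF j i])
  also have "\<dots> = 0"
    by (simp add: gx_comm[OF i j] mult.assoc half_double_left)
  finally show ?thesis
    using mem_II_equiv II_zero by simp
qed

lemma dia_euler: "(\<Sum>k\<in>idx. x k \<diamond> d k) - (e (- of_nat n / 2) - H) \<in> \<I>"
proof -
  have "(\<Sum>k\<in>idx. x k \<diamond> d k) - (e (- of_nat n / 2) - H) \<approx> euler - (e (- of_nat n / 2) - H)"
    by (intro equiv_II_diff equiv_II_refl equiv_II_sum dia_X_comm X_d) simp
  also have "\<dots> = 0"
    by (simp add: H_euler)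
  finally show ?thesis
    using mem_II_equiv II_zero by simp
qed

lemma dslash_in_II: "dslash \<in> \<I>"
proof -
  have "dslash = e (sqrt 2 / \<i>) * X"
    by (simp add: X_eq hom_mult_left hom_one)
  then show ?thesis by (simp add: II_X)
qed

lemma xslash_in_II: "xslash \<in> \<I>"
proof -
  have "xslash = Y * e (sqrt 2 / \<i>)"
    by (simp add: Y_eq hom_mult_left hom_one flip: central)
  then show ?thesis by (simp add: II_Y)
qed

lemma dia_dirac: "(\<Sum>k\<in>idx. \<gamma> k \<diamond> d k) \<in> \<I>"
proof -
  have "(\<Sum>k\<in>idx. \<gamma> k \<diamond> d k) \<approx> dslash"
    by (intro equiv_II_sum dia_X_comm X_d) simp
  then show ?thesis using dslash_in_II by (rule mem_II_equiv)
qed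

lemma sum_gl_x: "(\<Sum>k\<in>idx. gl k * x k) = xslash"
proof -
  have "(\<Sum>k\<in>idx. gl k * x k) = (\<Sum>k\<in>idx. \<Sum>l\<in>idx. e (etainv k l) * (\<gamma> l * x k))"
    by (simp add: glow_def sum_distrib_right mult.assoc)
  also have "\<dots> = (\<Sum>l\<in>idx. \<Sum>k\<in>idx. \<gamma> l * (e (etainv l k) * x k))"
    by (subst sum.swap) (intro sum.cong refl, simp add: central_left etainv_swap)
  also have "\<dots> = xslash"
    by (simp add: xlow_def sum_distrib_left)
  finally show ?thesis .
qed

lemma dia_gl_x: "(\<Sum>k\<in>idx. gl k \<diamond> x k) \<in> \<I>"
proof -
  have double_xl_Y: "(2 * xl k) * Y = Y * (2 * xl k) + c * 0" for k
    by (simp add: mult.assoc xl_Y mult_double_right)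
  have "(\<Sum>k\<in>idx. gl k \<diamond> x k)
      \<approx> (\<Sum>k\<in>idx. gl k * x k + e (1/2) * (Hinv 1 * ((2 * xl k) * \<gamma> k + 0 * du k)))"
    by (intro equiv_II_sum dia_x_shift[OF _ gl_Hinv gl_Y double_xl_Y])
  also have "\<dots> = xslash + Hinv 1 * xslash"
    by (simp add: sum.distrib sum_gl_x mult.assoc half_double_left sum_distrib_left g_xl)
  finally show ?thesis
    using mem_II_equiv II_add II_Hinv xslash_in_II by blast
qed

end

lemma is_localization_weyl_clifford:
  assumes "\<forall>a\<in>{1..n}. \<forall>b\<in>{1..n}. eta a b = eta b a"
    and "\<forall>a\<in>{1..n}. \<forall>c\<in>{1..n}. (\<Sum>b\<in>{1..n}. eta a b * etainv b c) = (if a = c then 1 else 0)"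
    and "is_localization n eta e g"
  shows "weyl_clifford n eta etainv e g"
proof -
  interpret central_hom e by (rule is_localization_central_hom[OF assms(3)])
  show ?thesis
    by unfold_locales
      (use assms is_localization_relations[OF assms(3)] is_localization_H_shift_unit[OF assms(3)] in auto)
qed

theorem theorem4p2:
  fixes n :: nat and eta etainv :: "nat \<Rightarrow> nat \<Rightarrow> complex"
    and e :: "complex \<Rightarrow> 'r::ring_1" and g :: "gen \<Rightarrow> 'r"
    and i j :: nat
  assumes "n \<ge> 1"
    and "\<forall>a\<in>{1..n}. \<forall>b\<in>{1..n}. eta a b = eta b a"
    and "\<forall>a\<in>{1..n}. \<forall>c\<in>{1..n}. (\<Sum>b\<in>{1..n}. eta a b * etainv b c) = (if a = c then 1 else 0)"
    and "is_localization n eta e g"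
    and "i \<in> {1..n}" and "j \<in> {1..n}"
  shows
   "dia n eta etainv e g (dlow g i) (gup g j) - dia n eta etainv e g (gup g j) (dlow g i)
      - rinv (Ho n e g) * dia n eta etainv e g (glow n etainv e g i) (dup n eta e g j)
      \<in> II n eta etainv e g
  \<and> dia n eta etainv e g (gup g i) (gup g j) + dia n eta etainv e g (gup g j) (gup g i)
      - (e (2 * eta i j) + e 2 * rinv (Ho n e g + 1) *
          (dia n eta etainv e g (xup g j) (dup n eta e g i)
           + dia n eta etainv e g (xup g i) (dup n eta e g j)))
      \<in> II n eta etainv e g
  \<and> dia n eta etainv e g (dlow g i) (xup g j) - dia n eta etainv e g (xup g j) (dlow g i)
      - (e (if i = j then 1 else 0)
         + e (1/2) * rinv (Ho n e g) * dia n eta etainv e g (glow n etainv e g i) (gup g j)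
         + rinv (Ho n e g + 1) * dia n eta etainv e g (xlow n etainv e g i) (dup n eta e g j))
      \<in> II n eta etainv e g
  \<and> dia n eta etainv e g (gup g i) (xup g j) - dia n eta etainv e g (xup g j) (gup g i)
      - rinv (Ho n e g + 1) * dia n eta etainv e g (xup g i) (gup g j)
      \<in> II n eta etainv e g
  \<and> (\<Sum>k\<in>{1..n}. dia n eta etainv e g (xup g k) (dlow g k))
      - (e (- of_nat n / 2) - Ho n e g)
      \<in> II n eta etainv e g
  \<and> (\<Sum>k\<in>{1..n}. dia n eta etainv e g (gup g k) (dlow g k)) \<in> II n eta etainv e g
  \<and> (\<Sum>k\<in>{1..n}. dia n eta etainv e g (glow n etainv e g k) (xup g k)) \<in> II n eta etainv e g"
proof -
  interpret weyl_clifford n eta etainv e g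
    using assms(2-4) by (rule is_localization_weyl_clifford)
  show ?thesis
    by (intro conjI dia_comm_d_gamma dia_anticomm_gamma_gamma dia_comm_d_x dia_comm_gamma_x
        dia_euler dia_dirac dia_gl_x assms(5,6))
qed

end
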